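(* Let $\eta>0$ be such that $\frac{1}{2\eta}$ and $\beta:=\frac{\eta}{300}T$ are integers, and let $\alpha:=\frac{100}{\eta}$ (assumed integer), so $T=3\alpha\beta$. Consider $K+1=3$ actions and the reward sequence consisting of $\beta$ identical batches; batch $i\in[\beta]$ consists of $\alpha$ rounds with reward vector $(1,1,0)$ (rounds $(i-1)3\alpha+1,\dots,(i-1)3\alpha+\alpha$), then $\alpha$ rounds with $(0,1,0)$, then $\alpha$ rounds with $(0,0,1)$. Then agile online gradient ascent with step size $\eta$ incurs swap regret $\Omega(T)$ on this sequence.
   Context: Agile online gradient ascent with step size $\eta$ on $K+1$ actions: $\boldsymbol{\pi}^{(1)}=(\frac{1}{K+1},\dots,\frac{1}{K+1})$; in round $t$ it plays the distribution $\boldsymbol{\pi}^{(t)}$, observes reward vector $\mathbf{r}^{(t)}$, and sets $\boldsymbol{\pi}^{(t+1)}:=\arg\min_{\boldsymbol{\pi}\in\Delta([K+1])}\|\boldsymbol{\pi}-(\boldsymbol{\pi}^{(t)}+\eta\mathbf{r}^{(t)})\|_2$, where $\Delta([K+1])$ is the probability simplex. The swap regret of an algorithm playing $\boldsymbol{\pi}^{(t)}$ against rewards $\mathbf{r}^{(t)}$ is $\max_{\phi:[K+1]\to[K+1]}\sum_{t\in[T]}\sum_{k\in[K+1]}\pi^{(t)}_k\big(r^{(t)}_{\phi(k)}-r^{(t)}_k\big)$. *)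

theory Defs
  imports "HOL-Analysis.Analysis"
begin

definition prob_simplex :: "(real^'n::finite) set" where
  "prob_simplex = {p. (\<forall>k. 0 \<le> p $ k) \<and> (\<Sum>k\<in>UNIV. p $ k) = 1}"

definition proj_simplex :: "real^'n::finite \<Rightarrow> real^'n" where
  "proj_simplex y = (SOME p. p \<in> prob_simplex \<and> (\<forall>q\<in>prob_simplex. norm (p - y) \<le> norm (q - y)))"

definition uniform_dist :: "real^'n::finite" where
  "uniform_dist = (\<chi> k. 1 / real CARD('n))"

text \<open>Agile online gradient ascent; rounds are indexed from 0, so agile_oga eta r t
  is the distribution played in round t+1 of the paper, and r t is the reward of that round.\<close>
primrec agile_oga :: "real \<Rightarrow> (nat \<Rightarrow> real^'n::finite) \<Rightarrow> nat \<Rightarrow> real^'n" where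
  "agile_oga eta r 0 = uniform_dist"
| "agile_oga eta r (Suc t) = proj_simplex (agile_oga eta r t + eta *\<^sub>R r t)"

definition swap_regret :: "nat \<Rightarrow> (nat \<Rightarrow> real^'n::finite) \<Rightarrow> (nat \<Rightarrow> real^'n) \<Rightarrow> real" where
  "swap_regret T play r =
     Max (range (\<lambda>\<phi> :: 'n \<Rightarrow> 'n.
        \<Sum>t<T. \<Sum>k\<in>UNIV. play t $ k * (r t $ (\<phi> k) - r t $ k)))"

definition hard_rewards :: "nat \<Rightarrow> nat \<Rightarrow> real^3" where
  "hard_rewards alpha t =
     (if t mod (3 * alpha) < alpha then vector [1, 1, 0]
      else if t mod (3 * alpha) < 2 * alpha then vector [0, 1, 0]
      else vector [0, 0, 1])"

end

theory Submission
  imports Defs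
begin

text \<open>Projecting onto the simplex subtracts a common threshold from all coordinates and clips
  at zero. Hence on the hard sequence the iterates run along three segments of the simplex: during
  the (1,1,0) rounds along the median from e3 to (1/2,1/2,0), during the (0,1,0) rounds along the
  edge towards e2, moving mass \<eta>/2 per round from action 1 to action 2, and during the (0,0,1)
  rounds along the edge towards e3; every phase is long enough to reach its endpoint. So in the
  first 1/(2\<eta>) rounds of each (0,1,0) phase action 1 still carries mass at least 1/4, and the
  swap 1 \<mapsto> 2 gains 1/(8\<eta>) per batch, i.e. T/2400 in total.\<close>

lemma norm_diff_less_of_inner_nonneg:
  fixes p q y :: "'a::real_inner"
  assumes "0 \<le> inner (q - p) (p - y)" and "q \<noteq> p"
  shows "norm (p - y) < norm (q - y)"
proof -
  have "(norm (q - y))\<^sup>2 = (norm (q - p))\<^sup>2 + 2 * inner (q - p) (p - y) + (norm (p - y))\<^sup>2"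
    using dot_norm[of "q - p" "p - y"] by simp
  moreover have "0 < norm (q - p)"
    using assms(2) by simp
  ultimately have "(norm (p - y))\<^sup>2 < (norm (q - y))\<^sup>2"
    using assms(1) by (smt (verit) zero_less_power)
  then show ?thesis
    by (rule power_less_imp_less_base) simp
qed

lemma proj_simplex_eqI:
  fixes p y :: "real^'n::finite"
  assumes p: "p \<in> prob_simplex" and threshold: "\<forall>k. p $ k = max 0 (y $ k - \<tau>)"
  shows "proj_simplex y = p"
proof -
  have closer: "norm (p - y) < norm (q - y)" if q: "q \<in> prob_simplex" "q \<noteq> p" for q
  proof (rule norm_diff_less_of_inner_nonneg[OF _ q(2)])
    have "(q $ k - p $ k) * (- \<tau>) \<le> (q $ k - p $ k) * (p $ k - y $ k)" for k
    proof (cases "y $ k \<le> \<tau>")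
      case True
      with q(1) threshold[rule_format, of k] show ?thesis
        by (simp add: prob_simplex_def mult_left_mono)
    qed (use threshold[rule_format, of k] in simp)
    then have "(\<Sum>k\<in>UNIV. q $ k - p $ k) * (- \<tau>) \<le> (\<Sum>k\<in>UNIV. (q $ k - p $ k) * (p $ k - y $ k))"
      unfolding sum_distrib_right by (rule sum_mono)
    also have "\<dots> = inner (q - p) (p - y)"
      by (simp add: inner_vec_def)
    finally have "(\<Sum>k\<in>UNIV. q $ k - p $ k) * (- \<tau>) \<le> inner (q - p) (p - y)" .
    moreover have "(\<Sum>k\<in>UNIV. q $ k - p $ k) = 0"
      using p q(1) by (simp add: prob_simplex_def sum_subtractf)
    ultimately show "0 \<le> inner (q - p) (p - y)"
      by simp
  qed
  show ?thesis
    unfolding proj_simplex_def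
    by (rule some_equality) (use p closer in \<open>force, meson not_le\<close>)
qed

definition median3 :: "real \<Rightarrow> real^3" where
  "median3 a = vector [a, a, 1 - 2 * a]"

definition edge12 :: "real \<Rightarrow> real^3" where
  "edge12 u = vector [1 - u, u, 0]"

definition edge23 :: "real \<Rightarrow> real^3" where
  "edge23 c = vector [0, 1 - c, c]"

lemma median3_half: "median3 (1/2) = edge12 (1/2)"
  and edge12_one: "edge12 1 = edge23 0"
  and edge23_one: "edge23 1 = median3 0"
  and uniform_dist_3: "(uniform_dist :: real^3) = median3 (1/3)"
  by (simp_all add: median3_def edge12_def edge23_def uniform_dist_def vec_eq_iff forall_3)

lemma prob_simplex_3:
  "(v :: real^3) \<in> prob_simplex \<longleftrightarrow> 0 \<le> v $ 1 \<and> 0 \<le> v $ 2 \<and> 0 \<le> v $ 3 \<and> v $ 1 + v $ 2 + v $ 3 = 1"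
  by (simp add: prob_simplex_def forall_3 sum_3)

lemma proj_simplex_median3_step:
  assumes "0 \<le> eta" "0 \<le> a" "a \<le> 1/2"
  shows "proj_simplex (median3 a + eta *\<^sub>R vector [1, 1, 0]) = median3 (min (1/2) (a + eta / 3))"
  by (rule proj_simplex_eqI[where \<tau> = "max (2 * eta / 3) (a + eta - 1/2)"])
    (use assms in \<open>auto simp: prob_simplex_3 median3_def forall_3 min_def max_def\<close>)

lemma proj_simplex_edge12_step:
  assumes "0 \<le> eta" "0 \<le> u" "u \<le> 1"
  shows "proj_simplex (edge12 u + eta *\<^sub>R vector [0, 1, 0]) = edge12 (min 1 (u + eta / 2))"
  by (rule proj_simplex_eqI[where \<tau> = "max (eta / 2) (u + eta - 1)"])
    (use assms in \<open>auto simp: prob_simplex_3 edge12_def forall_3\<close>)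

lemma proj_simplex_edge23_step:
  assumes "0 \<le> eta" "0 \<le> c" "c \<le> 1"
  shows "proj_simplex (edge23 c + eta *\<^sub>R vector [0, 0, 1]) = edge23 (min 1 (c + eta / 2))"
  by (rule proj_simplex_eqI[where \<tau> = "max (eta / 2) (c + eta - 1)"])
    (use assms in \<open>auto simp: prob_simplex_3 edge23_def forall_3\<close>)

lemma agile_oga_clamped_phase:
  fixes v :: "real \<Rightarrow> real^'n::finite"
  assumes reward: "\<forall>j<n. r (s + j) = e"
    and step: "\<And>x. 0 \<le> x \<Longrightarrow> x \<le> h \<Longrightarrow> proj_simplex (v x + eta *\<^sub>R e) = v (min h (x + d))"
    and "0 \<le> d" "0 \<le> x" and x_le: "x \<le> h"
    and start: "agile_oga eta r s = v x"
  shows "j \<le> n \<Longrightarrow> agile_oga eta r (s + j) = v (min h (x + real j * d))"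
proof (induction j)
  case 0
  then show ?case using start x_le by simp
next
  case (Suc j)
  then have "agile_oga eta r (s + Suc j) = proj_simplex (v (min h (x + real j * d)) + eta *\<^sub>R e)"
    using reward by simp
  also have "\<dots> = v (min h (min h (x + real j * d) + d))"
    by (rule step) (use assms in auto)
  also have "min h (min h (x + real j * d) + d) = min h (x + real (Suc j) * d)"
    using \<open>0 \<le> d\<close> by (auto simp: algebra_simps min_def)
  finally show ?case .
qed

lemma hard_rewards_periodic: "hard_rewards alpha (3 * alpha * i + k) = hard_rewards alpha k"
  by (simp add: hard_rewards_def)

lemma hard_rewards_batch_phases:
  assumes "j < alpha"
  shows "hard_rewards alpha (3 * alpha * i + j) = vector [1, 1, 0]"
    and "hard_rewards alpha (3 * alpha * i + alpha + j) = vector [0, 1, 0]"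
    and "hard_rewards alpha (3 * alpha * i + 2 * alpha + j) = vector [0, 0, 1]"
  using assms by (simp_all only: hard_rewards_periodic add.assoc) (simp_all add: hard_rewards_def)

lemma agile_oga_hard_rewards_batch:
  assumes eta: "0 < eta" and long: "2 \<le> real alpha * eta"
    and a: "0 \<le> a" "a \<le> 1/2"
    and start: "agile_oga eta (hard_rewards alpha) (3 * alpha * i) = median3 a"
  shows "\<forall>j\<le>alpha. agile_oga eta (hard_rewards alpha) (3 * alpha * i + alpha + j)
           = edge12 (min 1 (1/2 + real j * (eta / 2)))"
    and "agile_oga eta (hard_rewards alpha) (3 * alpha * Suc i) = median3 0"
proof -
  let ?x = "agile_oga eta (hard_rewards alpha)"
  have "?x (3 * alpha * i + alpha) = median3 (min (1/2) (a + real alpha * (eta / 3)))"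
    by (rule agile_oga_clamped_phase[OF _ proj_simplex_median3_step _ a start, where n = alpha])
      (use eta hard_rewards_batch_phases(1) in auto)
  also have "min (1/2) (a + real alpha * (eta / 3)) = 1/2"
    using long a by auto
  finally have phase2_start: "?x (3 * alpha * i + alpha) = edge12 (1/2)"
    by (simp add: median3_half)
  show phase2: "\<forall>j\<le>alpha. ?x (3 * alpha * i + alpha + j) = edge12 (min 1 (1/2 + real j * (eta / 2)))"
    by (intro allI impI agile_oga_clamped_phase[OF _ proj_simplex_edge12_step _ _ _ phase2_start,
        where n = alpha]) (use eta hard_rewards_batch_phases(2) in auto)
  have "min 1 (1/2 + real alpha * (eta / 2)) = 1"
    using long by auto
  moreover have "3 * alpha * i + alpha + alpha = 3 * alpha * i + 2 * alpha"
    by simp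
  ultimately have phase3_start: "?x (3 * alpha * i + 2 * alpha) = edge23 0"
    using phase2[rule_format, of alpha] by (simp only: edge12_one)
  have "?x (3 * alpha * i + 2 * alpha + alpha) = edge23 (min 1 (0 + real alpha * (eta / 2)))"
    by (rule agile_oga_clamped_phase[OF _ proj_simplex_edge23_step _ _ _ phase3_start, where n = alpha])
      (use eta hard_rewards_batch_phases(3) in auto)
  also have "min 1 (0 + real alpha * (eta / 2)) = 1"
    using long by auto
  finally have "?x (3 * alpha * i + 2 * alpha + alpha) = median3 0"
    by (simp only: edge23_one)
  moreover have "3 * alpha * i + 2 * alpha + alpha = 3 * alpha * Suc i"
    by simp
  ultimately show "?x (3 * alpha * Suc i) = median3 0"
    by (simp only:)
qed

lemma agile_oga_hard_rewards_batch_start: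
  assumes eta: "0 < eta" and long: "2 \<le> real alpha * eta"
  shows "\<exists>a. 0 \<le> a \<and> a \<le> 1/2 \<and> agile_oga eta (hard_rewards alpha) (3 * alpha * i) = median3 a"
proof (induction i)
  case 0
  have "agile_oga eta (hard_rewards alpha) (3 * alpha * 0) = median3 (1/3)"
    unfolding mult_0_right agile_oga.simps(1) by (rule uniform_dist_3)
  then show ?case
    by (intro exI[of _ "1/3"]) simp
next
  case (Suc i)
  then obtain a where "0 \<le> a" "a \<le> 1/2" "agile_oga eta (hard_rewards alpha) (3 * alpha * i) = median3 a"
    by blast
  then show ?case
    using agile_oga_hard_rewards_batch(2)[OF eta long] by (intro exI[of _ 0]) simp
qed

lemma agile_oga_hard_rewards_phase2:
  assumes eta: "0 < eta" and long: "2 \<le> real alpha * eta" and "j \<le> alpha"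
  shows "agile_oga eta (hard_rewards alpha) (3 * alpha * i + alpha + j)
           = edge12 (min 1 (1/2 + real j * (eta / 2)))"
  using agile_oga_hard_rewards_batch_start[OF eta long] agile_oga_hard_rewards_batch(1)[OF eta long]
    \<open>j \<le> alpha\<close> by blast

lemma swap_regret_ge:
  fixes play r :: "nat \<Rightarrow> real^'n::finite"
  shows "(\<Sum>t<T. \<Sum>k\<in>UNIV. play t $ k * (r t $ \<phi> k - r t $ k)) \<le> swap_regret T play r"
  unfolding swap_regret_def by (rule Max_ge) auto

definition swap12_gain :: "real \<Rightarrow> nat \<Rightarrow> nat \<Rightarrow> real" where
  "swap12_gain eta alpha t =
     agile_oga eta (hard_rewards alpha) t $ 1 * (hard_rewards alpha t $ 2 - hard_rewards alpha t $ 1)"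

lemma swap12_gain_nonneg:
  assumes eta: "0 < eta" and long: "2 \<le> real alpha * eta"
  shows "0 \<le> swap12_gain eta alpha t"
proof (cases "alpha \<le> t mod (3 * alpha) \<and> t mod (3 * alpha) < 2 * alpha")
  case True
  define j where "j = t mod (3 * alpha) - alpha"
  have "3 * alpha * (t div (3 * alpha)) + alpha + j = t" "j \<le> alpha"
    using True by (simp_all add: j_def, linarith)
  then have "agile_oga eta (hard_rewards alpha) t = edge12 (min 1 (1/2 + real j * (eta / 2)))"
    using agile_oga_hard_rewards_phase2[OF eta long] by metis
  then have "0 \<le> agile_oga eta (hard_rewards alpha) t $ 1"
    by (simp add: edge12_def)
  then show ?thesis
    using True by (simp add: swap12_gain_def hard_rewards_def)
next
  case False
  then show ?thesis
    by (auto simp: swap12_gain_def hard_rewards_def)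
qed

lemma swap12_gain_batch:
  assumes eta: "0 < eta" and long: "2 \<le> real alpha * eta" and short: "real m * eta \<le> 1/2"
  shows "real m / 4 \<le> (\<Sum>t\<in>{i * (3 * alpha)..<i * (3 * alpha) + 3 * alpha}. swap12_gain eta alpha t)"
proof -
  let ?b = "i * (3 * alpha) + alpha"
  have "real m * eta \<le> real alpha * eta"
    using long short by linarith
  then have "m \<le> alpha"
    using eta by simp
  have early_phase2: "1/4 \<le> swap12_gain eta alpha t" if "t \<in> {?b..<?b + m}" for t
  proof -
    define j where "j = t - ?b"
    have t: "t = 3 * alpha * i + alpha + j" and "j < m"
      using that by (auto simp: j_def)
    with \<open>m \<le> alpha\<close> have "j < alpha"
      by simp
    have "real j * eta \<le> real m * eta"
      using \<open>j < m\<close> eta by (intro mult_right_mono) simp_all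
    then have "real j * eta \<le> 1/2"
      using short by linarith
    moreover have "agile_oga eta (hard_rewards alpha) t = edge12 (min 1 (1/2 + real j * (eta / 2)))"
      unfolding t by (rule agile_oga_hard_rewards_phase2[OF eta long]) (use \<open>j < alpha\<close> in simp)
    moreover have "hard_rewards alpha t = vector [0, 1, 0]"
      unfolding t by (rule hard_rewards_batch_phases(2)[OF \<open>j < alpha\<close>])
    ultimately show ?thesis
      by (simp add: swap12_gain_def edge12_def mult.commute)
  qed
  have "real m / 4 = real (card {?b..<?b + m}) * (1/4)"
    by simp
  also have "\<dots> \<le> (\<Sum>t\<in>{?b..<?b + m}. swap12_gain eta alpha t)"
    by (rule sum_bounded_below) (rule early_phase2)
  also have "\<dots> \<le> (\<Sum>t\<in>{i * (3 * alpha)..<i * (3 * alpha) + 3 * alpha}. swap12_gain eta alpha t)"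
    by (rule sum_mono2) (use \<open>m \<le> alpha\<close> swap12_gain_nonneg[OF eta long] in auto)
  finally show ?thesis .
qed

lemma swap_regret_hard_rewards_ge:
  assumes eta: "0 < eta" and long: "2 \<le> real alpha * eta" and short: "real m * eta \<le> 1/2"
  shows "real beta * real m / 4
           \<le> swap_regret (beta * (3 * alpha)) (agile_oga eta (hard_rewards alpha)) (hard_rewards alpha)"
proof -
  let ?swap12 = "\<lambda>k :: 3. if k = 1 then 2 else k"
  have "real beta * real m / 4 = (\<Sum>i<beta. real m / 4)"
    by simp
  also have "\<dots> \<le> (\<Sum>i<beta. \<Sum>t\<in>{i * (3 * alpha)..<i * (3 * alpha) + 3 * alpha}. swap12_gain eta alpha t)"
    by (rule sum_mono) (rule swap12_gain_batch[OF eta long short])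
  also have "\<dots> = (\<Sum>t<beta * (3 * alpha). swap12_gain eta alpha t)"
    by (rule sum.nat_group)
  also have "\<dots> = (\<Sum>t<beta * (3 * alpha). \<Sum>k\<in>UNIV. agile_oga eta (hard_rewards alpha) t $ k
                     * (hard_rewards alpha t $ ?swap12 k - hard_rewards alpha t $ k))"
    by (simp add: swap12_gain_def sum_3)
  also have "\<dots> \<le> swap_regret (beta * (3 * alpha)) (agile_oga eta (hard_rewards alpha)) (hard_rewards alpha)"
    by (rule swap_regret_ge)
  finally show ?thesis .
qed

theorem mainTheorem10:
  shows "\<exists>c>0. \<forall>(eta::real) (T::nat) (m::nat) (alpha::nat) (beta::nat).
           eta > 0 \<and> 1 / (2 * eta) = real m \<and> 100 / eta = real alpha
           \<and> eta / 300 * real T = real beta \<and> T > 0 \<longrightarrow>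
           swap_regret T (agile_oga eta (hard_rewards alpha)) (hard_rewards alpha) \<ge> c * real T"
proof (intro exI[of _ "1/2400"] conjI allI impI)
  fix eta :: real and T m alpha beta :: nat
  assume "eta > 0 \<and> 1 / (2 * eta) = real m \<and> 100 / eta = real alpha
           \<and> eta / 300 * real T = real beta \<and> T > 0"
  then have eta: "0 < eta" and m: "real m * eta = 1/2" and alpha: "real alpha * eta = 100"
    and beta: "real T * eta = 300 * real beta"
    by (auto simp: field_simps)
  have "real T * eta = real (beta * (3 * alpha)) * eta"
    using alpha beta by (simp add: algebra_simps)
  then have "real T = real (beta * (3 * alpha))"
    using eta by simp
  then have T: "T = beta * (3 * alpha)"
    by (simp only: of_nat_eq_iff)
  have "real alpha * eta = 200 * real m * eta"
    using alpha m by (simp add: algebra_simps)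
  then have "real alpha = 200 * real m"
    using eta by simp
  then have "1/2400 * real T = real beta * real m / 4"
    unfolding T by simp
  also have "\<dots> \<le> swap_regret T (agile_oga eta (hard_rewards alpha)) (hard_rewards alpha)"
    unfolding T by (rule swap_regret_hard_rewards_ge[OF eta]) (simp_all add: alpha m)
  finally show "1/2400 * real T \<le> swap_regret T (agile_oga eta (hard_rewards alpha)) (hard_rewards alpha)" .
qed simp

end
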